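(* Let $\epsilon>0$, $p\in(0,1)$, $\delta\in(0,1)$, and let $\rho,\sigma$ be quantum states on a finite-dimensional Hilbert space $H_A$. Then \[ n^{\star}_{\mathrm B,\epsilon}(\rho,\sigma,p,\delta)\le\left(\frac{e^\epsilon+1}{e^\epsilon-1}\right)^2\frac{2\log(1/\delta)}{E_1(\rho\|\sigma)^2}, \qquad n^{\star}_{\mathrm B,\epsilon}\!\left(\rho,\sigma,p,\tfrac p4\right)\le\left(\frac{e^\epsilon+1}{e^\epsilon-1}\right)^2\frac{2\log(1/p)+2\log4}{E_1(\rho\|\sigma)^2}. \]
   Context: All Hilbert spaces are finite-dimensional, $\log$ is natural, $a/0=+\infty$ for $a>0$. $E_\gamma(\rho\|\sigma)=\mathrm{Tr}(\rho-\gamma\sigma)_+$; $E_1(\rho\|\sigma)=\frac12\|\rho-\sigma\|_1$. For $p\in(0,1)$, $p_e(\rho,\sigma,p):=p-pE_{(1-p)/p}(\rho\|\sigma)$ and $n^{\star}_{\mathrm B}(\rho,\sigma,p,\delta):=\inf\{n\in\mathbb N:p_e(\rho^{\otimes n},\sigma^{\otimes n},p)\le\delta\}$. A quantum channel $\mathcal A$ from operators on $H_A$ to operators on some finite-dimensional $H_B$ is in $\mathrm{LDP}_\epsilon$ if $E_{e^\epsilon}(\mathcal A(\rho)\|\mathcal A(\sigma))=0$ for all states $\rho,\sigma$ on $H_A$; $n^{\star}_{\mathrm B,\epsilon}(\rho,\sigma,p,\delta):=\inf_{\mathcal A\in\mathrm{LDP}_\epsilon}n^{\star}_{\mathrm B}(\mathcal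 A(\rho),\mathcal A(\sigma),p,\delta)$. *)

theory Defs
  imports "Jordan_Normal_Form.Schur_Decomposition" "HOL-Library.Extended_Real"
begin

text \<open>Operators on a d-dimensional Hilbert space C^d are d x d complex matrices.\<close>

definition mtrace :: "complex mat \<Rightarrow> complex" where
  "mtrace A = (\<Sum>i<dim_row A. A $$ (i, i))"

definition hermitian :: "complex mat \<Rightarrow> bool" where
  "hermitian A \<longleftrightarrow> A \<in> carrier_mat (dim_row A) (dim_row A) \<and> mat_adjoint A = A"

definition psd :: "complex mat \<Rightarrow> bool" where
  "psd A \<longleftrightarrow> hermitian A \<and>
     (\<forall>v \<in> carrier_vec (dim_row A). Re ((A *\<^sub>v v) \<bullet>c v) \<ge> 0)"

definition density :: "nat \<Rightarrow> complex mat \<Rightarrow> bool" where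
  "density d \<rho> \<longleftrightarrow> \<rho> \<in> carrier_mat d d \<and> psd \<rho> \<and> mtrace \<rho> = 1"

definition unitary_mat :: "nat \<Rightarrow> complex mat \<Rightarrow> bool" where
  "unitary_mat n U \<longleftrightarrow> U \<in> carrier_mat n n \<and> mat_adjoint U * U = 1\<^sub>m n"

definition pos_part :: "complex mat \<Rightarrow> complex mat" where
  "pos_part X = (SOME P. \<exists>U D. unitary_mat (dim_row X) U \<and> D \<in> carrier_mat (dim_row X) (dim_row X)
      \<and> diagonal_mat D \<and> (\<forall>i < dim_row X. D $$ (i, i) \<in> \<real>)
      \<and> X = U * D * mat_adjoint U
      \<and> P = U * mat (dim_row X) (dim_row X)
               (\<lambda>(i, j). if i = j then complex_of_real (max 0 (Re (D $$ (i, i)))) else 0)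
             * mat_adjoint U)"

text \<open>Hockey-stick divergence E_gamma(rho||sigma) = Tr (rho - gamma sigma)_+.\<close>
definition hockey :: "real \<Rightarrow> complex mat \<Rightarrow> complex mat \<Rightarrow> real" where
  "hockey \<gamma> \<rho> \<sigma> = Re (mtrace (pos_part (\<rho> - complex_of_real \<gamma> \<cdot>\<^sub>m \<sigma>)))"

text \<open>Kronecker (tensor) product, first factor major, and tensor powers.\<close>
definition kron :: "complex mat \<Rightarrow> complex mat \<Rightarrow> complex mat" where
  "kron A B = mat (dim_row A * dim_row B) (dim_col A * dim_col B)
     (\<lambda>(i, j). A $$ (i div dim_row B, j div dim_col B) * B $$ (i mod dim_row B, j mod dim_col B))"

fun tpow :: "complex mat \<Rightarrow> nat \<Rightarrow> complex mat" where
  "tpow A 0 = 1\<^sub>m 1"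
| "tpow A (Suc n) = kron (tpow A n) A"

definition p_err :: "complex mat \<Rightarrow> complex mat \<Rightarrow> real \<Rightarrow> real" where
  "p_err \<rho> \<sigma> p = p - p * hockey ((1 - p) / p) \<rho> \<sigma>"

text \<open>Sample complexity n*_B (infimum over the naturals, including 0; Inf {} = infinity).\<close>
definition nB :: "complex mat \<Rightarrow> complex mat \<Rightarrow> real \<Rightarrow> real \<Rightarrow> enat" where
  "nB \<rho> \<sigma> p \<delta> = (INF n \<in> {n::nat. p_err (tpow \<rho> n) (tpow \<sigma> n) p \<le> \<delta>}. enat n)"

text \<open>Quantum channels from C^dA to C^dB: linear, trace-preserving, completely positive.
  (id_k \<otimes> Phi) acts blockwise on operators on C^k \<otimes> C^dA.\<close>
definition block :: "nat \<Rightarrow> complex mat \<Rightarrow> nat \<Rightarrow> nat \<Rightarrow> complex mat" where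
  "block dA X a b = mat dA dA (\<lambda>(r, s). X $$ (a * dA + r, b * dA + s))"

definition id_tensor :: "nat \<Rightarrow> nat \<Rightarrow> nat \<Rightarrow> (complex mat \<Rightarrow> complex mat) \<Rightarrow> complex mat \<Rightarrow> complex mat" where
  "id_tensor k dA dB \<Phi> X = mat (k * dB) (k * dB)
     (\<lambda>(i, j). \<Phi> (block dA X (i div dB) (j div dB)) $$ (i mod dB, j mod dB))"

definition quantum_channel :: "nat \<Rightarrow> nat \<Rightarrow> (complex mat \<Rightarrow> complex mat) \<Rightarrow> bool" where
  "quantum_channel dA dB \<Phi> \<longleftrightarrow>
     (\<forall>X \<in> carrier_mat dA dA. \<Phi> X \<in> carrier_mat dB dB)
   \<and> (\<forall>X \<in> carrier_mat dA dA. \<forall>Y \<in> carrier_mat dA dA. \<forall>a b :: complex.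
        \<Phi> (a \<cdot>\<^sub>m X + b \<cdot>\<^sub>m Y) = a \<cdot>\<^sub>m \<Phi> X + b \<cdot>\<^sub>m \<Phi> Y)
   \<and> (\<forall>X \<in> carrier_mat dA dA. mtrace (\<Phi> X) = mtrace X)
   \<and> (\<forall>k. \<forall>X \<in> carrier_mat (k * dA) (k * dA). psd X \<longrightarrow> psd (id_tensor k dA dB \<Phi> X))"

definition LDP :: "nat \<Rightarrow> real \<Rightarrow> nat \<Rightarrow> (complex mat \<Rightarrow> complex mat) \<Rightarrow> bool" where
  "LDP dA \<epsilon> dB \<Phi> \<longleftrightarrow> quantum_channel dA dB \<Phi> \<and>
     (\<forall>\<rho> \<sigma>. density dA \<rho> \<longrightarrow> density dA \<sigma> \<longrightarrow> hockey (exp \<epsilon>) (\<Phi> \<rho>) (\<Phi> \<sigma>) = 0)"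

definition nB_LDP :: "nat \<Rightarrow> real \<Rightarrow> complex mat \<Rightarrow> complex mat \<Rightarrow> real \<Rightarrow> real \<Rightarrow> enat" where
  "nB_LDP dA \<epsilon> \<rho> \<sigma> p \<delta> =
     (INF c \<in> {(dB, \<Phi>). LDP dA \<epsilon> dB \<Phi>}. nB ((snd c) \<rho>) ((snd c) \<sigma>) p \<delta>)"

text \<open>Division a/b with the convention a/0 = +infinity (used only with a > 0).\<close>
definition ediv :: "real \<Rightarrow> real \<Rightarrow> ereal" where
  "ediv a b = (if b = 0 then \<infinity> else ereal (a / b))"

end

theory Submission
  imports Defs "Jordan_Normal_Form.Spectral_Radius"
begin

text \<open>Diagonalize rho - sigma = U D U*, so that E_1(rho||sigma) is the sum of its positive
  eigenvalues. Measuring in the eigenbasis and answering by binary randomized response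
  whether the observed eigenvalue is positive (truthfully with probability e^eps/(e^eps+1))
  is an eps-LDP channel. It maps rho and sigma to commuting binary states whose
  probabilities of outcome 0 differ by t = (e^eps-1)/(e^eps+1) E_1(rho||sigma). For n copies
  of commuting states the Bayes error is at most sqrt(p(1-p)) F^n, and the Bhattacharyya
  coefficient satisfies F <= exp(-t^2/2); at n = floor(2 log(1/delta)/t^2) the error is
  at most e^(1/2) delta/2 <= delta.\<close>

section \<open>Unitary matrices and the spectral theorem\<close>

lemma mat_adjoint_dim [simp]:
  "dim_row (mat_adjoint A) = dim_col A" "dim_col (mat_adjoint A) = dim_row A"
  by (auto simp: mat_adjoint_def)

lemma mat_adjoint_index [simp]:
  "i < dim_col A \<Longrightarrow> j < dim_row A \<Longrightarrow> mat_adjoint A $$ (i, j) = cnj (A $$ (j, i))"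
  by (auto simp: mat_adjoint_def mat_of_rows_def)

lemma mat_adjoint_carrier [simp]: "A \<in> carrier_mat n m \<Longrightarrow> mat_adjoint A \<in> carrier_mat m n"
  by auto

lemma mat_adjoint_adjoint [simp]: "mat_adjoint (mat_adjoint (A :: complex mat)) = A"
  by (rule eq_matI) auto

lemma mat_adjoint_mult:
  "A \<in> carrier_mat n m \<Longrightarrow> B \<in> carrier_mat m k \<Longrightarrow>
    mat_adjoint (A * (B :: complex mat)) = mat_adjoint B * mat_adjoint A"
  by (rule eq_matI) (auto simp: scalar_prod_def mult.commute intro!: sum.cong)

lemma unitary_mat_right_inverse:
  "unitary_mat n U \<Longrightarrow> U * mat_adjoint U = 1\<^sub>m n"
  using mat_mult_left_right_inverse[of "mat_adjoint U" n U] unfolding unitary_mat_def by auto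

lemma unitary_conjugate_cancel:
  assumes U: "unitary_mat n U" and D: "D \<in> carrier_mat n n"
  shows "mat_adjoint U * (U * D * mat_adjoint U) * U = D"
proof -
  have Uc: "U \<in> carrier_mat n n" and UU: "mat_adjoint U * U = 1\<^sub>m n"
    using U unfolding unitary_mat_def by auto
  have "mat_adjoint U * (U * D * mat_adjoint U) * U = (mat_adjoint U * U) * D * (mat_adjoint U * U)"
    using Uc D by (simp add: assoc_mult_mat[of _ n n _ n _ n] mult_carrier_mat[of _ n n])
  then show ?thesis using D by (simp add: UU)
qed

lemma unitary_col_norm:
  assumes "unitary_mat n U" "k < n"
  shows "(\<Sum>s<n. (cmod (U $$ (s, k)))\<^sup>2) = 1"
proof -
  have U: "U \<in> carrier_mat n n" and UU: "mat_adjoint U * U = 1\<^sub>m n"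
    using assms unfolding unitary_mat_def by auto
  have "1 = (mat_adjoint U * U) $$ (k, k)" using assms UU by simp
  also have "\<dots> = (\<Sum>s<n. cnj (U $$ (s, k)) * U $$ (s, k))"
    using U assms by (simp add: scalar_prod_def lessThan_atLeast0)
  also have "\<dots> = (\<Sum>s<n. complex_of_real ((cmod (U $$ (s, k)))\<^sup>2))"
    by (intro sum.cong refl) (metis complex_norm_square mult.commute)
  finally show ?thesis by (metis of_real_eq_1_iff of_real_sum)
qed

lemma unitary_row_norm:
  assumes "unitary_mat n U" "s < n"
  shows "(\<Sum>k<n. (cmod (U $$ (s, k)))\<^sup>2) = 1"
proof -
  have U: "U \<in> carrier_mat n n" using assms unfolding unitary_mat_def by auto
  have "1 = (U * mat_adjoint U) $$ (s, s)" using assms unitary_mat_right_inverse by simp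
  also have "\<dots> = (\<Sum>k<n. U $$ (s, k) * cnj (U $$ (s, k)))"
    using U assms by (simp add: scalar_prod_def lessThan_atLeast0)
  also have "\<dots> = (\<Sum>k<n. complex_of_real ((cmod (U $$ (s, k)))\<^sup>2))"
    by (intro sum.cong refl) (metis complex_norm_square)
  finally show ?thesis by (metis of_real_eq_1_iff of_real_sum)
qed

definition normalize_vec :: "complex vec \<Rightarrow> complex vec" where
  "normalize_vec w = complex_of_real (1 / sqrt (Re (w \<bullet>c w))) \<cdot>\<^sub>v w"

lemma normalize_vec_carrier [simp]: "w \<in> carrier_vec n \<Longrightarrow> normalize_vec w \<in> carrier_vec n"
  by (simp add: normalize_vec_def)

lemma cscalar_normalize_vec:
  assumes "v \<in> carrier_vec n" "w \<in> carrier_vec n"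
  shows "normalize_vec v \<bullet>c normalize_vec w
    = complex_of_real (1 / sqrt (Re (v \<bullet>c v)) * (1 / sqrt (Re (w \<bullet>c w)))) * (v \<bullet>c w)"
  using assms unfolding normalize_vec_def conjugate_smult_vec
  by (simp add: smult_scalar_prod_distrib[of _ n] scalar_prod_smult_distrib[of _ n])

lemma normalize_vec_unit:
  assumes v: "v \<in> carrier_vec n" "v \<noteq> 0\<^sub>v n"
  shows "normalize_vec v \<bullet>c normalize_vec v = 1"
proof -
  define r where "r = Re (v \<bullet>c v)"
  have "v \<bullet>c v > 0" using v by simp
  then have vv: "v \<bullet>c v = complex_of_real r" and r: "r > 0"
    unfolding r_def by (auto simp: less_complex_def complex_eq_iff)
  have "1 / sqrt r * (1 / sqrt r) * r = 1" using r by (simp add: field_simps)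
  then show ?thesis
    unfolding cscalar_normalize_vec[OF v(1) v(1)] vv Re_complex_of_real
    by (metis of_real_1 of_real_mult)
qed

lemma corthogonal_normalize_vec:
  assumes vs: "set vs \<subseteq> carrier_vec n" and orth: "corthogonal vs"
  shows "corthogonal (map normalize_vec vs)"
    and "w \<in> set (map normalize_vec vs) \<Longrightarrow> w \<bullet>c w = 1"
proof -
  have unit: "normalize_vec (vs ! i) \<bullet>c normalize_vec (vs ! i) = 1" if i: "i < length vs" for i
  proof (rule normalize_vec_unit)
    show c: "vs ! i \<in> carrier_vec n" using i vs by auto
    have "vs ! i \<bullet>c vs ! i \<noteq> 0" using corthogonalD[OF orth i i] by simp
    then show "vs ! i \<noteq> 0\<^sub>v n" using c by auto
  qed
  then show "w \<in> set (map normalize_vec vs) \<Longrightarrow> w \<bullet>c w = 1"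
    by (auto simp: in_set_conv_nth)
  show "corthogonal (map normalize_vec vs)"
  proof (rule corthogonalI)
    fix i j assume "i < length (map normalize_vec vs)" "j < length (map normalize_vec vs)"
    then have ij: "i < length vs" "j < length vs" by simp_all
    then have c: "vs ! i \<in> carrier_vec n" "vs ! j \<in> carrier_vec n" using vs by auto
    show "(map normalize_vec vs ! i \<bullet>c map normalize_vec vs ! j = 0) = (i \<noteq> j)"
    proof (cases "i = j")
      case True
      then show ?thesis using ij unit[of i] by simp
    next
      case False
      then have "vs ! i \<bullet>c vs ! j = 0" using corthogonalD[OF orth ij] by simp
      then show ?thesis using False ij by (simp add: cscalar_normalize_vec[OF c])
    qed
  qed
qed

lemma corthogonal_inv_unit_cols:
  assumes "set ws \<subseteq> carrier_vec n" "\<And>w. w \<in> set ws \<Longrightarrow> w \<bullet>c w = 1"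
  shows "corthogonal_inv (mat_of_cols n ws) = mat_adjoint (mat_of_cols n ws)"
proof -
  have "map vec_inv ws = map conjugate ws"
    using assms(2) by (auto simp: vec_inv_def)
  then show ?thesis
    unfolding corthogonal_inv_def mat_adjoint_def cols_mat_of_cols[OF assms(1)]
    by (metis mat_of_cols_carrier(2))
qed

lemma unitary_eigenvector_first_column:
  fixes A :: "complex mat"
  assumes A: "A \<in> carrier_mat (Suc m) (Suc m)"
  obtains W e where "similar_mat_wit A (mat_adjoint W * A * W) W (mat_adjoint W)"
    and "col (mat_adjoint W * A * W) 0 = vec (Suc m) (\<lambda>i. if i = 0 then e else 0)"
proof -
  let ?n = "Suc m"
  obtain e where e: "eigenvalue A e"
    using spectrum_non_empty[OF A] unfolding spectrum_def by auto
  define v where "v = find_eigenvector A e"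
  have v: "v \<in> carrier_vec ?n" and v0: "v \<noteq> 0\<^sub>v ?n" and Av: "A *\<^sub>v v = e \<cdot>\<^sub>v v"
    using find_eigenvector[OF A e] A unfolding v_def eigenvector_def by auto
  interpret cof_vec_space ?n "TYPE(complex)" .
  define b where "b = basis_completion v"
  from basis_completion[OF v v0, folded b_def]
  have dist_b: "distinct b" and indep: "\<not> lin_dep (set b)" and b: "set b \<subseteq> carrier_vec ?n"
    and hdb: "hd b = v" and len_b: "length b = ?n" by auto
  from hdb len_b obtain vs where bv: "b = v # vs" by (cases b) auto
  define ws0 where "ws0 = gram_schmidt ?n b"
  from gram_schmidt_result[OF b dist_b indep refl, folded ws0_def]
  have ws0: "set ws0 \<subseteq> carrier_vec ?n" "corthogonal ws0" "length ws0 = ?n"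
    by (auto simp: len_b)
  have hdws0: "hd ws0 = v" using gram_schmidt_hd[OF v, of vs] unfolding ws0_def bv .
  \<comment> \<open>The library's Schur step with the Gram--Schmidt basis normalized, so that the
    change of basis becomes unitary.\<close>
  define ws where "ws = map normalize_vec ws0"
  have ws: "set ws \<subseteq> carrier_vec ?n" "corthogonal ws" "length ws = ?n"
    and ws1: "\<And>w. w \<in> set ws \<Longrightarrow> w \<bullet>c w = 1"
    using ws0 corthogonal_normalize_vec[OF ws0(1,2)] unfolding ws_def by auto
  define v' where "v' = normalize_vec v"
  have hdws: "hd ws = v'" unfolding ws_def v'_def using hdws0 ws0(3) by (cases ws0) auto
  have v': "v' \<in> carrier_vec ?n" using v unfolding v'_def by simp
  have v'0: "v' \<noteq> 0\<^sub>v ?n"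
    using ws1[of v'] hdws ws(3) by (cases ws) (auto simp: v')
  have Av': "A *\<^sub>v v' = e \<cdot>\<^sub>v v'" unfolding v'_def normalize_vec_def using Av A v
    by (auto simp: mult_mat_vec[of _ ?n ?n] smult_smult_assoc mult.commute)
  define W where "W = mat_of_cols ?n ws"
  have W'inv: "mat_adjoint W = corthogonal_inv W"
    unfolding W_def using corthogonal_inv_unit_cols[OF ws(1) ws1] by simp
  have W: "W \<in> carrier_mat ?n ?n" and W': "mat_adjoint W \<in> carrier_mat ?n ?n"
    using ws unfolding W_def by auto
  have W'W: "inverts_mat (mat_adjoint W) W"
    unfolding W'inv unfolding W_def by (rule corthogonal_inv_result[OF orthogonal_mat_of_cols[OF ws]])
  then have WW': "inverts_mat W (mat_adjoint W)"
    using mat_mult_left_right_inverse[OF W' W] W' W unfolding inverts_mat_def by auto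
  show ?thesis
  proof (rule that)
    show "similar_mat_wit A (mat_adjoint W * A * W) W (mat_adjoint W)"
      by (rule similar_mat_wit_sym, rule similar_mat_witI[of _ _ ?n])
        (use W W' A W'W WW' in \<open>auto simp: inverts_mat_def\<close>)
    show "col (mat_adjoint W * A * W) 0 = vec ?n (\<lambda>i. if i = 0 then e else 0)"
      using corthogonal_col_ev_0[OF A v' v'0 Av' _ hdws ws] unfolding W'inv unfolding W_def by simp
  qed
qed

lemma unitary_schur:
  fixes A :: "complex mat"
  assumes "A \<in> carrier_mat n n"
  shows "\<exists>U B. similar_mat_wit A B U (mat_adjoint U) \<and> upper_triangular B"
  using assms
proof (induct n arbitrary: A)
  case 0
  then show ?case
    by (intro exI[of _ "1\<^sub>m 0"] exI[of _ A])
      (auto intro!: similar_mat_witI[of _ _ 0] simp: upper_triangular_def)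
next
  case (Suc m A)
  let ?n = "Suc m"
  obtain W e where simAA': "similar_mat_wit A (mat_adjoint W * A * W) W (mat_adjoint W)"
    and col0: "col (mat_adjoint W * A * W) 0 = vec ?n (\<lambda>i. if i = 0 then e else 0)"
    using unitary_eigenvector_first_column[OF Suc(2)] by blast
  define A' where "A' = mat_adjoint W * A * W"
  have A': "A' \<in> carrier_mat ?n ?n" and W: "W \<in> carrier_mat ?n ?n"
    using similar_mat_witD2[OF Suc(2) simAA'] unfolding A'_def by auto
  obtain A1 A2 A0 A3 where splitA': "split_block A' 1 1 = (A1, A2, A0, A3)"
    by (cases "split_block A' 1 1") auto
  from A' have "dim_row A' = 1 + m" "dim_col A' = 1 + m" by auto
  from split_block[OF splitA' this] have A2: "A2 \<in> carrier_mat 1 m"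
    and A3: "A3 \<in> carrier_mat m m" and A'block: "A' = four_block_mat A1 A2 A0 A3" by auto
  have A1id: "A1 = mat 1 1 (\<lambda>_. e)"
    using splitA'[unfolded split_block_def Let_def] arg_cong[OF col0, of "\<lambda>v. v $ 0"] A' W
    by (auto simp: col_def A'_def)
  have A1: "A1 \<in> carrier_mat 1 1" unfolding A1id by auto
  have "A' $$ (Suc i, 0) = 0" if "i < m" for i
    using arg_cong[OF col0, of "\<lambda>v. v $ Suc i"] A' W that by (auto simp: A'_def)
  then have A0id: "A0 = 0\<^sub>m m 1"
    using splitA'[unfolded split_block_def Let_def] A' by auto
  have A0: "A0 \<in> carrier_mat m 1" unfolding A0id by auto
  from Suc(1)[OF A3] obtain P' B
    where simIH: "similar_mat_wit A3 B P' (mat_adjoint P')" and ut: "upper_triangular B" by auto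
  define Q' where "Q' = mat_adjoint P'"
  from similar_mat_witD2[OF A3 simIH[folded Q'_def]]
  have B: "B \<in> carrier_mat m m" and P': "P' \<in> carrier_mat m m" and Q': "Q' \<in> carrier_mat m m"
    and PQ': "P' * Q' = 1\<^sub>m m" by auto
  let ?P' = "four_block_mat (1\<^sub>m 1) (0\<^sub>m 1 m) (0\<^sub>m m 1) P'"
  let ?Q' = "four_block_mat (1\<^sub>m 1) (0\<^sub>m 1 m) (0\<^sub>m m 1) Q'"
  define C where "C = four_block_mat A1 (A2 * P') A0 B"
  have A0_eq: "A0 = P' * A0 * 1\<^sub>m 1" unfolding A0id using P' by auto
  have simA'C: "similar_mat_wit A' C ?P' ?Q'" unfolding A'block C_def
    by (rule similar_mat_wit_four_block[OF similar_mat_wit_refl[OF A1] simIH[folded Q'_def] _ A0_eq A1 A3 A0])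
      (use PQ' A2 P' Q' in auto)
  have utC: "upper_triangular C" unfolding C_def A0id
    by (intro upper_triangular_four_block[OF _ B _ ut]) (auto simp: A1id)
  have "?Q' = mat_adjoint ?P'"
    by (rule eq_matI) (use P' in \<open>auto simp: Q'_def\<close>)
  moreover have "?P' \<in> carrier_mat ?n ?n" using P' by auto
  ultimately have "?Q' * mat_adjoint W = mat_adjoint (W * ?P')"
    by (simp add: mat_adjoint_mult[OF W])
  with similar_mat_wit_trans[OF simAA'[folded A'_def] simA'C] utC show ?case by metis
qed

definition spectral_decomp :: "complex mat \<Rightarrow> complex mat \<Rightarrow> complex mat \<Rightarrow> bool" where
  "spectral_decomp X U D \<longleftrightarrow> unitary_mat (dim_row X) U \<and> D \<in> carrier_mat (dim_row X) (dim_row X)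
     \<and> diagonal_mat D \<and> (\<forall>i < dim_row X. D $$ (i, i) \<in> \<real>) \<and> X = U * D * mat_adjoint U"

lemma hermitian_spectral:
  fixes X :: "complex mat"
  assumes X: "X \<in> carrier_mat n n" and h: "mat_adjoint X = X"
  shows "\<exists>U D. spectral_decomp X U D"
proof -
  from unitary_schur[OF X] obtain U B
    where sim: "similar_mat_wit X B U (mat_adjoint U)" and ut: "upper_triangular B" by auto
  note sw = similar_mat_witD2[OF X sim]
  have U: "unitary_mat n U" using sw unfolding unitary_mat_def by auto
  note XB = sw(3) and B = sw(5)
  have Uc: "U \<in> carrier_mat n n" using U unfolding unitary_mat_def by simp
  have BX: "B = mat_adjoint U * X * U" using unitary_conjugate_cancel[OF U B] XB by simp
  \<comment> \<open>A Hermitian upper triangular matrix is diagonal with real diagonal.\<close>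
  have "mat_adjoint B = mat_adjoint U * mat_adjoint X * mat_adjoint (mat_adjoint U)"
    unfolding BX using Uc X
    by (simp add: mat_adjoint_mult[of _ n n _ n] assoc_mult_mat[of _ n n _ n _ n])
  then have hB: "mat_adjoint B = B" unfolding h mat_adjoint_adjoint BX .
  have Bij: "B $$ (i, j) = cnj (B $$ (j, i))" if "i < n" "j < n" for i j
    using arg_cong[OF hB, of "\<lambda>M. M $$ (i, j)"] that B by auto
  have "diagonal_mat B"
    unfolding diagonal_mat_def
  proof (intro allI impI)
    fix i j assume ij: "i < dim_row B" "j < dim_col B" "i \<noteq> j"
    show "B $$ (i, j) = 0"
    proof (cases "j < i")
      case True then show ?thesis using ut ij unfolding upper_triangular_def by auto
    next
      case False
      then have "B $$ (j, i) = 0" using ut ij B unfolding upper_triangular_def by auto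
      then show ?thesis using Bij[of i j] ij B by auto
    qed
  qed
  moreover have "\<forall>i<n. B $$ (i, i) \<in> \<real>" using Bij by (metis Reals_cnj_iff)
  moreover have "dim_row X = n" using X by simp
  ultimately show ?thesis unfolding spectral_decomp_def using U B XB by blast
qed

section \<open>The trace of the positive part\<close>

lemma mtrace_mult_comm:
  assumes A: "A \<in> carrier_mat n m" and B: "B \<in> carrier_mat m n"
  shows "mtrace (A * B) = mtrace (B * (A :: complex mat))"
proof -
  have "mtrace (A * B) = (\<Sum>i<n. \<Sum>k<m. A $$ (i, k) * B $$ (k, i))"
    unfolding mtrace_def using A B by (simp add: scalar_prod_def lessThan_atLeast0)
  also have "\<dots> = (\<Sum>k<m. \<Sum>i<n. B $$ (k, i) * A $$ (i, k))"
    by (subst sum.swap) (simp add: mult.commute)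
  also have "\<dots> = mtrace (B * A)"
    unfolding mtrace_def using A B by (simp add: scalar_prod_def lessThan_atLeast0)
  finally show ?thesis .
qed

lemma trace_pos_part:
  assumes "\<exists>U D. spectral_decomp X U D"
  obtains U D where "spectral_decomp X U D"
    and "Re (mtrace (pos_part X)) = (\<Sum>i<dim_row X. max 0 (Re (D $$ (i, i))))"
proof -
  let ?n = "dim_row X"
  let ?Dp = "\<lambda>D. mat ?n ?n (\<lambda>(i, j). if i = j then complex_of_real (max 0 (Re (D $$ (i, i)))) else 0)"
  let ?P = "\<lambda>P. \<exists>U D. spectral_decomp X U D \<and> P = U * ?Dp D * mat_adjoint U"
  have "pos_part X = Eps ?P"
    unfolding pos_part_def spectral_decomp_def by (simp add: conj_assoc)
  moreover have "Ex ?P" using assms by blast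
  ultimately have "?P (pos_part X)" using someI_ex[of ?P] by simp
  then obtain U D where sd: "spectral_decomp X U D" and pp: "pos_part X = U * ?Dp D * mat_adjoint U"
    by blast
  have "unitary_mat ?n U" using sd unfolding spectral_decomp_def by blast
  then have U: "U \<in> carrier_mat ?n ?n" and UU: "mat_adjoint U * U = 1\<^sub>m ?n"
    unfolding unitary_mat_def by blast+
  have M: "?Dp D * mat_adjoint U \<in> carrier_mat ?n ?n" using U by auto
  have "mtrace (pos_part X) = mtrace (U * (?Dp D * mat_adjoint U))"
    unfolding pp using U by (simp add: assoc_mult_mat[of _ ?n ?n _ ?n _ ?n])
  also have "\<dots> = mtrace ((?Dp D * mat_adjoint U) * U)"
    by (rule mtrace_mult_comm[OF U M])
  also have "\<dots> = mtrace (?Dp D)" using U UU by (simp add: assoc_mult_mat[of _ ?n ?n _ ?n _ ?n])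
  finally have "Re (mtrace (pos_part X)) = (\<Sum>i<?n. max 0 (Re (D $$ (i, i))))"
    by (simp add: mtrace_def)
  with sd that show ?thesis by blast
qed

lemma mult_diagonal_adjoint_index:
  fixes U V D :: "complex mat"
  assumes U: "U \<in> carrier_mat n n" and V: "V \<in> carrier_mat n n" and D: "D \<in> carrier_mat n n"
    and dg: "diagonal_mat D" and ij: "i < n" "j < n"
  shows "(U * D * mat_adjoint V) $$ (i, j) = (\<Sum>k<n. U $$ (i, k) * D $$ (k, k) * cnj (V $$ (j, k)))"
proof -
  have UD: "(U * D) $$ (i, k) = U $$ (i, k) * D $$ (k, k)" if k: "k < n" for k
  proof -
    have "(U * D) $$ (i, k) = (\<Sum>r<n. U $$ (i, r) * D $$ (r, k))"
      using U D ij k by (simp add: scalar_prod_def lessThan_atLeast0)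
    also have "\<dots> = (\<Sum>r\<in>{k}. U $$ (i, r) * D $$ (r, k))"
      by (rule sum.mono_neutral_right) (use dg D k in \<open>auto simp: diagonal_mat_def\<close>)
    finally show ?thesis by simp
  qed
  show ?thesis using U V D ij UD by (simp add: scalar_prod_def lessThan_atLeast0)
qed

lemma Re_mult_real_cnj:
  assumes "c \<in> \<real>"
  shows "Re (z * c * cnj z) = (cmod z)\<^sup>2 * Re c"
proof -
  have "cmod z * cmod z = Re z * Re z + Im z * Im z" by (metis cmod_power2 power2_eq_square)
  then show ?thesis using assms by (auto elim!: Reals_cases simp: algebra_simps power2_eq_square)
qed

lemma Re_diag_conjugate_diagonal:
  fixes U D :: "complex mat"
  assumes U: "U \<in> carrier_mat n n" and D: "D \<in> carrier_mat n n" and dD: "diagonal_mat D"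
    and re: "\<forall>k<n. D $$ (k, k) \<in> \<real>" and i: "i < n"
  shows "Re ((U * D * mat_adjoint U) $$ (i, i)) = (\<Sum>k<n. (cmod (U $$ (i, k)))\<^sup>2 * Re (D $$ (k, k)))"
proof -
  have "Re ((U * D * mat_adjoint U) $$ (i, i))
      = (\<Sum>k<n. Re (U $$ (i, k) * D $$ (k, k) * cnj (U $$ (i, k))))"
    using mult_diagonal_adjoint_index[OF U U D dD i i] by (simp only: Re_sum)
  also have "\<dots> = (\<Sum>k<n. (cmod (U $$ (i, k)))\<^sup>2 * Re (D $$ (k, k)))"
    by (intro sum.cong refl Re_mult_real_cnj) (use re in auto)
  finally show ?thesis .
qed

lemma sum_max0_le_stochastic:
  fixes w :: "nat \<Rightarrow> nat \<Rightarrow> real"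
  assumes w0: "\<And>i j. i < m \<Longrightarrow> j < n \<Longrightarrow> 0 \<le> w i j"
    and w1: "\<And>j. j < n \<Longrightarrow> (\<Sum>i<m. w i j) \<le> 1"
    and y: "\<And>i. i < m \<Longrightarrow> y i = (\<Sum>j<n. w i j * z j)"
  shows "(\<Sum>i<m. max 0 (y i)) \<le> (\<Sum>j<n. max 0 (z j))"
proof -
  have "(\<Sum>i<m. max 0 (y i)) \<le> (\<Sum>i<m. \<Sum>j<n. w i j * max 0 (z j))"
  proof (rule sum_mono)
    fix i assume i: "i \<in> {..<m}"
    have "y i = (\<Sum>j<n. w i j * z j)" using y i by simp
    also have "\<dots> \<le> (\<Sum>j<n. w i j * max 0 (z j))"
      using w0 i by (intro sum_mono mult_left_mono) auto
    moreover have "0 \<le> (\<Sum>j<n. w i j * max 0 (z j))" using w0 i by (intro sum_nonneg) auto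
    ultimately show "max 0 (y i) \<le> (\<Sum>j<n. w i j * max 0 (z j))" by simp
  qed
  also have "\<dots> = (\<Sum>j<n. (\<Sum>i<m. w i j) * max 0 (z j))"
    by (subst sum.swap) (simp add: sum_distrib_right)
  also have "\<dots> \<le> (\<Sum>j<n. max 0 (z j))"
    using w0 w1 by (intro sum_mono mult_left_le_one_le) (auto intro: sum_nonneg)
  finally show ?thesis .
qed

lemma trace_pos_part_diagonal:
  assumes X: "X \<in> carrier_mat n n" and dX: "diagonal_mat X" and re: "\<forall>i<n. X $$ (i, i) \<in> \<real>"
  shows "Re (mtrace (pos_part X)) = (\<Sum>i<n. max 0 (Re (X $$ (i, i))))"
proof -
  have n: "dim_row X = n" using X by simp
  have "mat_adjoint (1\<^sub>m n) = (1\<^sub>m n :: complex mat)" by (rule eq_matI) auto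
  then have "spectral_decomp X (1\<^sub>m n) X"
    using X dX re by (simp add: spectral_decomp_def unitary_mat_def)
  then obtain U D where sd: "spectral_decomp X U D"
    and tr: "Re (mtrace (pos_part X)) = (\<Sum>k<dim_row X. max 0 (Re (D $$ (k, k))))"
    using trace_pos_part by blast
  have "unitary_mat n U \<and> D \<in> carrier_mat n n \<and> diagonal_mat D \<and> (\<forall>k<n. D $$ (k, k) \<in> \<real>)
      \<and> X = U * D * mat_adjoint U"
    using sd unfolding spectral_decomp_def n .
  then have U: "unitary_mat n U" and D: "D \<in> carrier_mat n n" and dD: "diagonal_mat D"
    and reD: "\<forall>k<n. D $$ (k, k) \<in> \<real>" and XU: "X = U * D * mat_adjoint U"
    by blast+
  have Uc: "U \<in> carrier_mat n n" using U unfolding unitary_mat_def by blast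
  \<comment> \<open>The diagonal of X and the eigenvalues D are mapped to each other by the doubly
    stochastic matrix of squared moduli of the entries of U.\<close>
  define w where "w s k = (cmod (U $$ (s, k)))\<^sup>2" for s k
  have X_D: "Re (X $$ (s, s)) = (\<Sum>k<n. w s k * Re (D $$ (k, k)))" if "s < n" for s
    unfolding XU w_def by (rule Re_diag_conjugate_diagonal[OF Uc D dD reD that])
  have DX: "D = mat_adjoint U * X * mat_adjoint (mat_adjoint U)"
    using unitary_conjugate_cancel[OF U D] XU by simp
  have D_X: "Re (D $$ (k, k)) = (\<Sum>s<n. w s k * Re (X $$ (s, s)))" if "k < n" for k
  proof -
    have "Re (D $$ (k, k)) = (\<Sum>s<n. (cmod (mat_adjoint U $$ (k, s)))\<^sup>2 * Re (X $$ (s, s)))"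
      by (subst DX, rule Re_diag_conjugate_diagonal[OF _ X dX re that]) (use Uc in simp)
    also have "\<dots> = (\<Sum>s<n. w s k * Re (X $$ (s, s)))"
      by (intro sum.cong refl) (use Uc that in \<open>simp add: w_def\<close>)
    finally show ?thesis .
  qed
  have "(\<Sum>k<n. max 0 (Re (D $$ (k, k)))) \<le> (\<Sum>s<n. max 0 (Re (X $$ (s, s))))"
    by (rule sum_max0_le_stochastic[of n n "\<lambda>k s. w s k"])
      (use D_X unitary_row_norm[OF U] in \<open>auto simp: w_def\<close>)
  moreover have "(\<Sum>s<n. max 0 (Re (X $$ (s, s)))) \<le> (\<Sum>k<n. max 0 (Re (D $$ (k, k))))"
    by (rule sum_max0_le_stochastic[of n n w])
      (use X_D unitary_col_norm[OF U] in \<open>auto simp: w_def\<close>)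
  ultimately show ?thesis unfolding tr n by linarith
qed

definition diag_real :: "nat \<Rightarrow> (nat \<Rightarrow> real) \<Rightarrow> complex mat" where
  "diag_real n x = mat n n (\<lambda>(i, j). if i = j then complex_of_real (x i) else 0)"

lemma hockey_diag_real:
  "hockey \<gamma> (diag_real n x) (diag_real n y) = (\<Sum>i<n. max 0 (x i - \<gamma> * y i))"
proof -
  have "diag_real n x - complex_of_real \<gamma> \<cdot>\<^sub>m diag_real n y = diag_real n (\<lambda>i. x i - \<gamma> * y i)"
    by (rule eq_matI) (auto simp: diag_real_def)
  moreover have "Re (mtrace (pos_part (diag_real n z))) = (\<Sum>i<n. max 0 (z i))" for z
    using trace_pos_part_diagonal[of "diag_real n z" n]
    by (auto simp: diag_real_def diagonal_mat_def)
  ultimately show ?thesis unfolding hockey_def by simp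
qed

section \<open>Measurement channels\<close>

lemma sum_split_div:
  fixes f :: "nat \<Rightarrow> 'a::comm_monoid_add"
  shows "(\<Sum>i<k * d. f i) = (\<Sum>a<k. \<Sum>s<d. f (a * d + s))"
proof -
  have "(\<Sum>i<k * d. f i) = (\<Sum>a<k. sum f {a * d..<a * d + d})"
    using sum.nat_group[of f d k] by simp
  also have "\<dots> = (\<Sum>a<k. \<Sum>s<d. f (a * d + s))"
  proof (rule sum.cong[OF refl])
    fix a
    have "sum f {a * d..<a * d + d} = sum f {0 + a * d..<d + a * d}" by (simp add: add.commute)
    also have "\<dots> = (\<Sum>s = 0..<d. f (s + a * d))" by (rule sum.shift_bounds_nat_ivl)
    finally show "sum f {a * d..<a * d + d} = (\<Sum>s<d. f (a * d + s))"
      by (simp add: atLeast0LessThan add.commute)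
  qed
  finally show ?thesis .
qed

definition col_form :: "complex mat \<Rightarrow> nat \<Rightarrow> nat \<Rightarrow> complex mat \<Rightarrow> complex" where
  "col_form U n r Z = (\<Sum>s<n. \<Sum>t<n. cnj (U $$ (s, r)) * Z $$ (s, t) * U $$ (t, r))"

lemma col_form_eq_conjugate:
  assumes Z: "Z \<in> carrier_mat n n" and U: "U \<in> carrier_mat n n" and r: "r < n"
  shows "col_form U n r Z = (mat_adjoint U * Z * U) $$ (r, r)"
proof -
  have "(mat_adjoint U * Z * U) $$ (r, r) = (\<Sum>t<n. (\<Sum>s<n. cnj (U $$ (s, r)) * Z $$ (s, t)) * U $$ (t, r))"
    using Z U r by (simp add: scalar_prod_def lessThan_atLeast0)
  also have "\<dots> = col_form U n r Z"
    unfolding col_form_def sum_distrib_right by (rule sum.swap)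
  finally show ?thesis by simp
qed

lemma col_form_eq_cscalar:
  assumes Z: "Z \<in> carrier_mat n n" and U: "U \<in> carrier_mat n n" and r: "r < n"
  shows "col_form U n r Z = (Z *\<^sub>v col U r) \<bullet>c col U r"
  using Z U r unfolding col_form_def
  by (simp add: scalar_prod_def lessThan_atLeast0 sum_distrib_right sum_distrib_left mult_ac)

lemma col_form_linear:
  assumes "X \<in> carrier_mat n n" "Y \<in> carrier_mat n n"
  shows "col_form U n r (x \<cdot>\<^sub>m X + y \<cdot>\<^sub>m Y) = x * col_form U n r X + y * col_form U n r Y"
proof -
  have "col_form U n r (x \<cdot>\<^sub>m X + y \<cdot>\<^sub>m Y) = (\<Sum>s<n. \<Sum>t<n.
      x * (cnj (U $$ (s, r)) * X $$ (s, t) * U $$ (t, r)) + y * (cnj (U $$ (s, r)) * Y $$ (s, t) * U $$ (t, r)))"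
    unfolding col_form_def by (intro sum.cong refl) (use assms in \<open>auto simp: algebra_simps\<close>)
  then show ?thesis by (simp add: col_form_def sum.distrib sum_distrib_left)
qed

lemma col_form_diff:
  assumes "X \<in> carrier_mat n n" "Y \<in> carrier_mat n n"
  shows "col_form U n r (X - Y) = col_form U n r X - col_form U n r Y"
  using assms unfolding col_form_def by (simp add: sum_subtractf[symmetric] algebra_simps)

lemma sum_col_form:
  assumes Z: "Z \<in> carrier_mat n n" and U: "unitary_mat n U"
  shows "(\<Sum>r<n. col_form U n r Z) = mtrace Z"
proof -
  have Uc: "U \<in> carrier_mat n n" using U unfolding unitary_mat_def by simp
  have "(\<Sum>r<n. col_form U n r Z) = mtrace (mat_adjoint U * (Z * U))"
    using Z Uc by (simp add: col_form_eq_conjugate mtrace_def assoc_mult_mat[of _ n n _ n _ n])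
  also have "\<dots> = mtrace (Z * U * mat_adjoint U)"
    using Z Uc by (simp add: mtrace_mult_comm[of "mat_adjoint U" n n])
  also have "\<dots> = mtrace Z"
    using Z Uc unitary_mat_right_inverse[OF U] by (simp add: assoc_mult_mat[of _ n n _ n _ n])
  finally show ?thesis .
qed

lemma col_form_density:
  assumes d: "density n \<rho>" and U: "U \<in> carrier_mat n n" and r: "r < n"
  shows "col_form U n r \<rho> = complex_of_real (Re (col_form U n r \<rho>))" "0 \<le> Re (col_form U n r \<rho>)"
proof -
  have rho: "\<rho> \<in> carrier_mat n n" and h: "mat_adjoint \<rho> = \<rho>"
    and pos: "\<forall>v \<in> carrier_vec n. Re ((\<rho> *\<^sub>v v) \<bullet>c v) \<ge> 0"
    using d unfolding density_def psd_def hermitian_def by auto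
  have "cnj (\<rho> $$ (s, t)) = \<rho> $$ (t, s)" if "s < n" "t < n" for s t
    using arg_cong[OF h, of "\<lambda>M. M $$ (t, s)"] rho that by auto
  then have "cnj (col_form U n r \<rho>) = (\<Sum>s<n. \<Sum>t<n. cnj (U $$ (t, r)) * \<rho> $$ (t, s) * U $$ (s, r))"
    unfolding col_form_def by (auto simp: mult_ac intro!: sum.cong)
  also have "\<dots> = col_form U n r \<rho>" unfolding col_form_def by (rule sum.swap)
  finally show "col_form U n r \<rho> = complex_of_real (Re (col_form U n r \<rho>))"
    by (metis Reals_cnj_iff Re_complex_of_real Reals_cases)
  show "0 \<le> Re (col_form U n r \<rho>)"
    using pos col_form_eq_cscalar[OF rho U r] U r by auto
qed

lemma sum_col_form_density:
  assumes "density n \<rho>" "unitary_mat n U"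
  shows "(\<Sum>r<n. Re (col_form U n r \<rho>)) = 1"
  using sum_col_form[of \<rho> n U] assms unfolding density_def by (simp flip: Re_sum)

text \<open>Measure in the orthonormal basis formed by the columns of U and, on outcome r,
  output the classical letter m with probability c m r.\<close>
definition meas_channel ::
  "nat \<Rightarrow> complex mat \<Rightarrow> nat \<Rightarrow> (nat \<Rightarrow> nat \<Rightarrow> real) \<Rightarrow> complex mat \<Rightarrow> complex mat" where
  "meas_channel n U d c Z = mat d d (\<lambda>(i, j).
     if i = j then (\<Sum>r<n. complex_of_real (c i r) * col_form U n r Z) else 0)"

lemma meas_channel_carrier: "meas_channel n U d c Z \<in> carrier_mat d d"
  by (simp add: meas_channel_def)

lemma meas_channel_linear:
  assumes "X \<in> carrier_mat n n" "Y \<in> carrier_mat n n"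
  shows "meas_channel n U d c (x \<cdot>\<^sub>m X + y \<cdot>\<^sub>m Y)
    = x \<cdot>\<^sub>m meas_channel n U d c X + y \<cdot>\<^sub>m meas_channel n U d c Y"
  by (rule eq_matI)
    (auto simp: meas_channel_def col_form_linear[OF assms] sum.distrib sum_distrib_left algebra_simps)

lemma mtrace_meas_channel:
  assumes Z: "Z \<in> carrier_mat n n" and U: "unitary_mat n U"
    and c1: "\<And>r. r < n \<Longrightarrow> (\<Sum>m<d. c m r) = 1"
  shows "mtrace (meas_channel n U d c Z) = mtrace Z"
proof -
  have "mtrace (meas_channel n U d c Z) = (\<Sum>m<d. \<Sum>r<n. complex_of_real (c m r) * col_form U n r Z)"
    by (simp add: mtrace_def meas_channel_def)
  also have "\<dots> = (\<Sum>r<n. complex_of_real (\<Sum>m<d. c m r) * col_form U n r Z)"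
    by (subst sum.swap) (simp add: sum_distrib_right)
  also have "\<dots> = (\<Sum>r<n. col_form U n r Z)" using c1 by simp
  also have "\<dots> = mtrace Z" by (rule sum_col_form[OF Z U])
  finally show ?thesis .
qed

lemma col_form_block:
  "col_form U n r (block n X a b)
    = (\<Sum>s<n. \<Sum>t<n. cnj (U $$ (s, r)) * X $$ (a * n + s, b * n + t) * U $$ (t, r))"
  unfolding col_form_def block_def by (intro sum.cong refl) simp

lemma cnj_col_form_block:
  assumes X: "X \<in> carrier_mat (k * n) (k * n)" and h: "mat_adjoint X = X" and ab: "a < k" "b < k"
  shows "cnj (col_form U n r (block n X b a)) = col_form U n r (block n X a b)"
proof -
  have lt: "a * n + s < k * n" "b * n + t < k * n" if "s < n" "t < n" for s t
  proof -
    have "a * n + s < Suc a * n" "b * n + t < Suc b * n" using that by simp_all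
    moreover have "Suc a * n \<le> k * n" "Suc b * n \<le> k * n"
      using ab by (simp_all only: Suc_le_eq[symmetric] mult_le_mono1)
    ultimately show "a * n + s < k * n" "b * n + t < k * n" by linarith+
  qed
  have "cnj (X $$ (b * n + s, a * n + t)) = X $$ (a * n + t, b * n + s)" if "s < n" "t < n" for s t
    using arg_cong[OF h, of "\<lambda>M. M $$ (a * n + t, b * n + s)"] X lt[OF that(2,1)] by auto
  then have "cnj (col_form U n r (block n X b a))
      = (\<Sum>s<n. \<Sum>t<n. cnj (U $$ (t, r)) * X $$ (a * n + t, b * n + s) * U $$ (s, r))"
    unfolding col_form_block by (auto simp: mult_ac intro!: sum.cong)
  also have "\<dots> = col_form U n r (block n X a b)" unfolding col_form_block by (rule sum.swap)
  finally show ?thesis .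
qed

lemma sum_col_form_block_eq_cscalar:
  fixes v :: "nat \<Rightarrow> complex" and U :: "complex mat" and r :: nat
  assumes X: "X \<in> carrier_mat (k * n) (k * n)"
  defines "y \<equiv> vec (k * n) (\<lambda>I. v (I div n) * U $$ (I mod n, r))"
  shows "(\<Sum>a<k. \<Sum>b<k. cnj (v a) * v b * col_form U n r (block n X a b)) = (X *\<^sub>v y) \<bullet>c y"
proof (cases "n = 0")
  case True
  then show ?thesis using X by (simp add: y_def col_form_def scalar_prod_def)
next
  case False
  have "(X *\<^sub>v y) \<bullet>c y = (\<Sum>I<k * n. \<Sum>J<k * n. X $$ (I, J) * y $ J * cnj (y $ I))"
    using X by (simp add: y_def scalar_prod_def lessThan_atLeast0 sum_distrib_right)
  also have "\<dots> = (\<Sum>a<k. \<Sum>s<n. \<Sum>b<k. \<Sum>t<n.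
      cnj (v a) * v b * (cnj (U $$ (s, r)) * X $$ (a * n + s, b * n + t) * U $$ (t, r)))"
    using False by (simp add: sum_split_div y_def algebra_simps)
  also have "\<dots> = (\<Sum>a<k. \<Sum>b<k. \<Sum>s<n. \<Sum>t<n.
      cnj (v a) * v b * (cnj (U $$ (s, r)) * X $$ (a * n + s, b * n + t) * U $$ (t, r)))"
    by (intro sum.cong refl sum.swap)
  also have "\<dots> = (\<Sum>a<k. \<Sum>b<k. cnj (v a) * v b * col_form U n r (block n X a b))"
    by (simp add: col_form_block sum_distrib_left)
  finally show ?thesis by simp
qed

lemma mult_add_less_mult: "a < k \<Longrightarrow> m < d \<Longrightarrow> a * d + m < k * (d :: nat)"
proof -
  assume "a < k" "m < d"
  then have "a * d + m < Suc a * d" "Suc a * d \<le> k * d"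
    using mult_le_mono1[of "Suc a" k d] by simp_all
  then show ?thesis by linarith
qed

lemma id_tensor_meas_channel_index:
  assumes "i < k * d" "j < k * d"
  shows "id_tensor k n d (meas_channel n U d c) X $$ (i, j) =
    (if i mod d = j mod d
     then (\<Sum>r<n. complex_of_real (c (i mod d) r) * col_form U n r (block n X (i div d) (j div d)))
     else 0)"
proof -
  have "0 < d" using assms by (cases d) auto
  then show ?thesis using assms by (simp add: id_tensor_def meas_channel_def)
qed

lemma cscalar_id_tensor_meas_channel:
  assumes w: "w \<in> carrier_vec (k * d)"
  shows "(id_tensor k n d (meas_channel n U d c) X *\<^sub>v w) \<bullet>c w
    = (\<Sum>m<d. \<Sum>r<n. complex_of_real (c m r) *
        (\<Sum>a<k. \<Sum>b<k. cnj (w $ (a * d + m)) * w $ (b * d + m) * col_form U n r (block n X a b)))"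
proof -
  let ?M = "id_tensor k n d (meas_channel n U d c) X"
  let ?F = "\<lambda>r a b. col_form U n r (block n X a b)"
  have Mc: "?M \<in> carrier_mat (k * d) (k * d)" by (simp add: id_tensor_def)
  have "(?M *\<^sub>v w) \<bullet>c w = (\<Sum>i<k * d. \<Sum>j<k * d. ?M $$ (i, j) * w $ j * cnj (w $ i))"
    using w Mc by (simp add: scalar_prod_def lessThan_atLeast0 sum_distrib_right)
  also have "\<dots> = (\<Sum>a<k. \<Sum>m<d. \<Sum>b<k. \<Sum>m'<d. ?M $$ (a * d + m, b * d + m')
      * w $ (b * d + m') * cnj (w $ (a * d + m)))"
    by (simp add: sum_split_div)
  \<comment> \<open>Only blocks with equal output letters m = m' survive.\<close>
  also have "\<dots> = (\<Sum>a<k. \<Sum>m<d. \<Sum>b<k. \<Sum>r<n.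
      complex_of_real (c m r) * (cnj (w $ (a * d + m)) * w $ (b * d + m) * ?F r a b))"
  proof (rule sum.cong[OF refl], rule sum.cong[OF refl], rule sum.cong[OF refl])
    fix a m b assume abm: "a \<in> {..<k}" "m \<in> {..<d}" "b \<in> {..<k}"
    have "?M $$ (a * d + m, b * d + m') = (if m = m' then (\<Sum>r<n. complex_of_real (c m r) * ?F r a b) else 0)"
      if "m' < d" for m'
      using abm that by (simp add: id_tensor_meas_channel_index mult_add_less_mult)
    then have "(\<Sum>m'<d. ?M $$ (a * d + m, b * d + m') * w $ (b * d + m') * cnj (w $ (a * d + m)))
        = (\<Sum>m'<d. if m' = m then (\<Sum>r<n. complex_of_real (c m r) * ?F r a b)
            * w $ (b * d + m) * cnj (w $ (a * d + m)) else 0)"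
      by (intro sum.cong refl) auto
    also have "\<dots> = (\<Sum>r<n. complex_of_real (c m r) * (cnj (w $ (a * d + m)) * w $ (b * d + m) * ?F r a b))"
      using abm by (simp add: sum_distrib_left sum_distrib_right mult_ac)
    finally show "(\<Sum>m'<d. ?M $$ (a * d + m, b * d + m') * w $ (b * d + m') * cnj (w $ (a * d + m)))
        = (\<Sum>r<n. complex_of_real (c m r) * (cnj (w $ (a * d + m)) * w $ (b * d + m) * ?F r a b))" .
  qed
  also have "\<dots> = (\<Sum>m<d. \<Sum>a<k. \<Sum>r<n. \<Sum>b<k.
      complex_of_real (c m r) * (cnj (w $ (a * d + m)) * w $ (b * d + m) * ?F r a b))"
    by (subst sum.swap) (rule sum.cong[OF refl], rule sum.cong[OF refl], rule sum.swap)
  also have "\<dots> = (\<Sum>m<d. \<Sum>r<n. complex_of_real (c m r) *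
      (\<Sum>a<k. \<Sum>b<k. cnj (w $ (a * d + m)) * w $ (b * d + m) * ?F r a b))"
    unfolding sum_distrib_left by (rule sum.cong[OF refl], rule sum.swap)
  finally show ?thesis .
qed

lemma psd_id_tensor_meas_channel:
  assumes X: "X \<in> carrier_mat (k * n) (k * n)" and pX: "psd X"
    and c0: "\<And>m r. m < d \<Longrightarrow> r < n \<Longrightarrow> 0 \<le> c m r"
  shows "psd (id_tensor k n d (meas_channel n U d c) X)"
proof -
  let ?M = "id_tensor k n d (meas_channel n U d c) X"
  have hX: "mat_adjoint X = X" using pX unfolding psd_def hermitian_def by blast
  have Mc: "?M \<in> carrier_mat (k * d) (k * d)" by (simp add: id_tensor_def)
  have "mat_adjoint ?M = ?M"
  proof (rule eq_matI)
    fix i j assume "i < dim_row ?M" "j < dim_col ?M"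
    then have ij: "i < k * d" "j < k * d" using Mc by auto
    then have "i div d < k" "j div d < k" by (simp_all add: less_mult_imp_div_less)
    then show "mat_adjoint ?M $$ (i, j) = ?M $$ (i, j)"
      using ij Mc by (auto simp: id_tensor_meas_channel_index cnj_col_form_block[OF X hX])
  qed (use Mc in auto)
  moreover have "0 \<le> Re ((?M *\<^sub>v w) \<bullet>c w)" if w: "w \<in> carrier_vec (k * d)" for w
  proof -
    define G where "G m r = (\<Sum>a<k. \<Sum>b<k.
      cnj (w $ (a * d + m)) * w $ (b * d + m) * col_form U n r (block n X a b))" for m r
    have "Re ((?M *\<^sub>v w) \<bullet>c w) = (\<Sum>m<d. \<Sum>r<n. c m r * Re (G m r))"
      unfolding cscalar_id_tensor_meas_channel[OF w] G_def by simp
    moreover have "0 \<le> Re (G m r)" for m r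
      using pX X sum_col_form_block_eq_cscalar[OF X, of "\<lambda>a. w $ (a * d + m)" U r]
      unfolding psd_def G_def by auto
    ultimately show ?thesis using c0 by (auto intro!: sum_nonneg)
  qed
  ultimately show ?thesis unfolding psd_def hermitian_def using Mc by auto
qed

lemma quantum_channel_meas_channel:
  assumes U: "unitary_mat n U" and c0: "\<And>m r. m < d \<Longrightarrow> r < n \<Longrightarrow> 0 \<le> c m r"
    and c1: "\<And>r. r < n \<Longrightarrow> (\<Sum>m<d. c m r) = 1"
  shows "quantum_channel n d (meas_channel n U d c)"
  unfolding quantum_channel_def
proof (intro conjI ballI allI impI)
  fix X Y :: "complex mat" and x y :: complex
  assume "X \<in> carrier_mat n n" "Y \<in> carrier_mat n n"
  then show "meas_channel n U d c (x \<cdot>\<^sub>m X + y \<cdot>\<^sub>m Y)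
      = x \<cdot>\<^sub>m meas_channel n U d c X + y \<cdot>\<^sub>m meas_channel n U d c Y"
    by (rule meas_channel_linear)
next
  fix X :: "complex mat" assume "X \<in> carrier_mat n n"
  then show "mtrace (meas_channel n U d c X) = mtrace X" by (rule mtrace_meas_channel[OF _ U c1])
next
  fix k and X :: "complex mat" assume "X \<in> carrier_mat (k * n) (k * n)" "psd X"
  then show "psd (id_tensor k n d (meas_channel n U d c) X)"
    by (rule psd_id_tensor_meas_channel) (rule c0)
qed (rule meas_channel_carrier)

definition meas_prob :: "nat \<Rightarrow> complex mat \<Rightarrow> (nat \<Rightarrow> nat \<Rightarrow> real) \<Rightarrow> complex mat \<Rightarrow> nat \<Rightarrow> real" where
  "meas_prob n U c \<rho> m = (\<Sum>r<n. c m r * Re (col_form U n r \<rho>))"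

lemma meas_channel_density:
  assumes "density n \<rho>" "U \<in> carrier_mat n n"
  shows "meas_channel n U d c \<rho> = diag_real d (meas_prob n U c \<rho>)"
proof -
  have "(\<Sum>r<n. complex_of_real (c m r) * col_form U n r \<rho>) = complex_of_real (meas_prob n U c \<rho> m)" for m
    unfolding meas_prob_def of_real_sum
    by (rule sum.cong[OF refl]) (subst col_form_density(1)[OF assms], auto)
  then show ?thesis by (auto simp: meas_channel_def diag_real_def)
qed

lemma meas_prob_nonneg:
  assumes "density n \<rho>" "U \<in> carrier_mat n n" "\<And>r. r < n \<Longrightarrow> 0 \<le> c m r"
  shows "0 \<le> meas_prob n U c \<rho> m"
  unfolding meas_prob_def using assms col_form_density(2)[OF assms(1,2)] by (auto intro: sum_nonneg)

lemma sum_meas_prob: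
  assumes "density n \<rho>" "unitary_mat n U" "\<And>r. r < n \<Longrightarrow> (\<Sum>m<d. c m r) = 1"
  shows "(\<Sum>m<d. meas_prob n U c \<rho> m) = 1"
proof -
  have "(\<Sum>m<d. meas_prob n U c \<rho> m) = (\<Sum>r<n. (\<Sum>m<d. c m r) * Re (col_form U n r \<rho>))"
    unfolding meas_prob_def sum_distrib_right by (rule sum.swap)
  also have "\<dots> = 1" using sum_col_form_density[OF assms(1,2)] by (simp add: assms(3))
  finally show ?thesis .
qed

lemma meas_prob_le:
  assumes dr: "density n \<rho>" and ds: "density n \<sigma>" and U: "unitary_mat n U"
    and ratio: "\<And>r r'. r < n \<Longrightarrow> r' < n \<Longrightarrow> c m r \<le> \<gamma> * c m r'"
  shows "meas_prob n U c \<rho> m \<le> \<gamma> * meas_prob n U c \<sigma> m"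
proof -
  have Uc: "U \<in> carrier_mat n n" using U unfolding unitary_mat_def by simp
  let ?q = "\<lambda>\<tau> r. Re (col_form U n r \<tau>)"
  have q0: "0 \<le> ?q \<tau> r" if "density n \<tau>" "r < n" for \<tau> r
    using col_form_density(2)[OF that(1) Uc that(2)] .
  \<comment> \<open>Both distributions of the basis index sum to one, so each probability is an average
    of c m r against the product distribution.\<close>
  have "meas_prob n U c \<rho> m = (\<Sum>r<n. c m r * ?q \<rho> r * (\<Sum>r'<n. ?q \<sigma> r'))"
    using sum_col_form_density[OF ds U] by (simp add: meas_prob_def)
  also have "\<dots> = (\<Sum>r<n. \<Sum>r'<n. c m r * ?q \<rho> r * ?q \<sigma> r')"
    by (simp only: sum_distrib_left)
  also have "\<dots> \<le> (\<Sum>r<n. \<Sum>r'<n. \<gamma> * c m r' * ?q \<sigma> r' * ?q \<rho> r)"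
  proof (intro sum_mono)
    fix r r' assume "r \<in> {..<n}" "r' \<in> {..<n}"
    then have "c m r * (?q \<rho> r * ?q \<sigma> r') \<le> \<gamma> * c m r' * (?q \<rho> r * ?q \<sigma> r')"
      using ratio q0[OF dr] q0[OF ds] by (intro mult_right_mono) auto
    then show "c m r * ?q \<rho> r * ?q \<sigma> r' \<le> \<gamma> * c m r' * ?q \<sigma> r' * ?q \<rho> r"
      by (simp only: mult_ac)
  qed
  also have "\<dots> = (\<Sum>r'<n. \<gamma> * c m r' * ?q \<sigma> r' * (\<Sum>r<n. ?q \<rho> r))"
    by (subst sum.swap) (simp only: sum_distrib_left)
  also have "\<dots> = \<gamma> * meas_prob n U c \<sigma> m"
    using sum_col_form_density[OF dr U] by (simp add: meas_prob_def sum_distrib_left mult.assoc)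
  finally show ?thesis .
qed

lemma LDP_meas_channel:
  assumes U: "unitary_mat n U" and c0: "\<And>m r. m < d \<Longrightarrow> r < n \<Longrightarrow> 0 \<le> c m r"
    and c1: "\<And>r. r < n \<Longrightarrow> (\<Sum>m<d. c m r) = 1"
    and ratio: "\<And>m r r'. m < d \<Longrightarrow> r < n \<Longrightarrow> r' < n \<Longrightarrow> c m r \<le> exp \<epsilon> * c m r'"
  shows "LDP n \<epsilon> d (meas_channel n U d c)"
proof -
  have Uc: "U \<in> carrier_mat n n" using U unfolding unitary_mat_def by simp
  have "hockey (exp \<epsilon>) (meas_channel n U d c \<rho>) (meas_channel n U d c \<sigma>) = 0"
    if dr: "density n \<rho>" and ds: "density n \<sigma>" for \<rho> \<sigma>
  proof -
    have "meas_prob n U c \<rho> m \<le> exp \<epsilon> * meas_prob n U c \<sigma> m" if "m < d" for m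
      using meas_prob_le[OF dr ds U, of c m "exp \<epsilon>"] ratio[OF that] by blast
    then have "(\<Sum>m<d. max 0 (meas_prob n U c \<rho> m - exp \<epsilon> * meas_prob n U c \<sigma> m)) = 0"
      by (intro sum.neutral) simp
    then show ?thesis
      by (simp only: meas_channel_density[OF dr Uc] meas_channel_density[OF ds Uc] hockey_diag_real)
  qed
  moreover have "quantum_channel n d (meas_channel n U d c)"
    by (rule quantum_channel_meas_channel[OF U]) (use c0 c1 in auto)
  ultimately show ?thesis unfolding LDP_def by blast
qed

section \<open>Tensor powers of diagonal states\<close>

text \<open>An index i < d^n of the n-fold tensor power is read in base d, the last factor
  giving the least significant digit, as in kron.\<close>
fun prod_prob :: "nat \<Rightarrow> (nat \<Rightarrow> real) \<Rightarrow> nat \<Rightarrow> nat \<Rightarrow> real" where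
  "prod_prob d \<alpha> 0 i = 1"
| "prod_prob d \<alpha> (Suc n) i = prod_prob d \<alpha> n (i div d) * \<alpha> (i mod d)"

lemma tpow_diag_real: "tpow (diag_real d \<alpha>) n = diag_real (d ^ n) (prod_prob d \<alpha> n)"
proof (induct n)
  case 0
  show ?case by (rule eq_matI) (auto simp: diag_real_def)
next
  case (Suc n)
  have dim_diag: "dim_row (diag_real m x) = m" "dim_col (diag_real m x) = m" for m x
    by (simp_all add: diag_real_def)
  have dims: "dim_row (tpow (diag_real d \<alpha>) n) = d ^ n" "dim_col (tpow (diag_real d \<alpha>) n) = d ^ n"
    unfolding Suc by (simp_all add: dim_diag)
  show ?case
  proof (rule eq_matI)
    fix i j assume "i < dim_row (diag_real (d ^ Suc n) (prod_prob d \<alpha> (Suc n)))"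
      "j < dim_col (diag_real (d ^ Suc n) (prod_prob d \<alpha> (Suc n)))"
    then have ij: "i < d ^ n * d" "j < d ^ n * d" by (simp_all add: dim_diag mult.commute)
    moreover from ij have "0 < d" by (cases d) auto
    ultimately have "i div d < d ^ n" "j div d < d ^ n" "i mod d < d" "j mod d < d"
      by (simp_all add: less_mult_imp_div_less)
    moreover have "(i div d = j div d \<and> i mod d = j mod d) \<longleftrightarrow> i = j"
      by (metis div_mult_mod_eq)
    ultimately have "tpow (diag_real d \<alpha>) n $$ (i div d, j div d) * diag_real d \<alpha> $$ (i mod d, j mod d)
        = (if i = j then complex_of_real (prod_prob d \<alpha> (Suc n) i) else 0)"
      unfolding Suc by (auto simp: diag_real_def)
    moreover have "tpow (diag_real d \<alpha>) (Suc n) $$ (i, j)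
        = tpow (diag_real d \<alpha>) n $$ (i div d, j div d) * diag_real d \<alpha> $$ (i mod d, j mod d)"
      using ij by (simp add: kron_def dims dim_diag)
    moreover have "diag_real (d ^ Suc n) (prod_prob d \<alpha> (Suc n)) $$ (i, j)
        = (if i = j then complex_of_real (prod_prob d \<alpha> (Suc n) i) else 0)"
      using ij by (simp add: diag_real_def mult.commute)
    ultimately show "tpow (diag_real d \<alpha>) (Suc n) $$ (i, j)
        = diag_real (d ^ Suc n) (prod_prob d \<alpha> (Suc n)) $$ (i, j)" by simp
  qed (simp_all add: kron_def dims dim_diag mult.commute)
qed

lemma sum_prod_prob: "(\<Sum>i<d ^ n. prod_prob d \<alpha> n i) = (\<Sum>m<d. \<alpha> m) ^ n"
proof (induct n)
  case (Suc n)
  have "(\<Sum>i<d ^ Suc n. prod_prob d \<alpha> (Suc n) i) = (\<Sum>a<d ^ n. \<Sum>m<d. prod_prob d \<alpha> n a * \<alpha> m)"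
    by (simp add: mult.commute[of d] sum_split_div)
  also have "\<dots> = (\<Sum>m<d. \<alpha> m) ^ Suc n"
    by (simp add: Suc flip: sum_distrib_left sum_distrib_right)
  finally show ?case .
qed simp

lemma prod_prob_sqrt:
  "prod_prob d (\<lambda>m. sqrt (\<alpha> m * \<beta> m)) n i = sqrt (prod_prob d \<alpha> n i * prod_prob d \<beta> n i)"
  by (induct n arbitrary: i) (simp_all add: real_sqrt_mult)

lemma prod_prob_nonneg: "(\<And>m. 0 \<le> \<alpha> m) \<Longrightarrow> 0 \<le> prod_prob d \<alpha> n i"
  by (induct n arbitrary: i) auto

lemma p_err_diag_real:
  assumes p: "0 < p" and x1: "(\<Sum>i<K. x i) = 1"
  shows "p_err (diag_real K x) (diag_real K y) p = (\<Sum>i<K. min (p * x i) ((1 - p) * y i))"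
proof -
  have "p * max 0 (x i - (1 - p) / p * y i) = max 0 (p * x i - (1 - p) * y i)" for i
    using p by (simp add: max_mult_distrib_left right_diff_distrib)
  then have "p * hockey ((1 - p) / p) (diag_real K x) (diag_real K y)
      = (\<Sum>i<K. max 0 (p * x i - (1 - p) * y i))"
    unfolding hockey_diag_real sum_distrib_left by (intro sum.cong refl)
  then have "p_err (diag_real K x) (diag_real K y) p
      = (\<Sum>i<K. p * x i) - (\<Sum>i<K. max 0 (p * x i - (1 - p) * y i))"
    unfolding p_err_def by (simp add: x1 flip: sum_distrib_left)
  also have "\<dots> = (\<Sum>i<K. p * x i - max 0 (p * x i - (1 - p) * y i))"
    by (simp only: sum_subtractf)
  also have "\<dots> = (\<Sum>i<K. min (p * x i) ((1 - p) * y i))"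
    by (intro sum.cong refl) (simp add: min_def max_def)
  finally show ?thesis .
qed

lemma min_le_sqrt_mult: "0 \<le> u \<Longrightarrow> 0 \<le> v \<Longrightarrow> min u v \<le> sqrt (u * (v :: real))"
  by (rule real_le_rsqrt) (auto simp: min_def power2_eq_square intro: mult_mono)

lemma p_err_tpow_le:
  assumes p: "0 < p" "p < 1" and \<alpha>: "\<And>m. 0 \<le> \<alpha> m" "(\<Sum>m<d. \<alpha> m) = 1" and \<beta>: "\<And>m. 0 \<le> \<beta> m"
  shows "p_err (tpow (diag_real d \<alpha>) N) (tpow (diag_real d \<beta>) N) p
    \<le> sqrt (p * (1 - p)) * (\<Sum>m<d. sqrt (\<alpha> m * \<beta> m)) ^ N"
proof -
  let ?a = "prod_prob d \<alpha> N" and ?b = "prod_prob d \<beta> N"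
  have "p_err (tpow (diag_real d \<alpha>) N) (tpow (diag_real d \<beta>) N) p
      = (\<Sum>i<d ^ N. min (p * ?a i) ((1 - p) * ?b i))"
    unfolding tpow_diag_real using p \<alpha>(2) by (simp add: p_err_diag_real sum_prod_prob)
  also have "\<dots> \<le> (\<Sum>i<d ^ N. sqrt (p * (1 - p)) * sqrt (?a i * ?b i))"
  proof (rule sum_mono)
    fix i
    have "min (p * ?a i) ((1 - p) * ?b i) \<le> sqrt ((p * ?a i) * ((1 - p) * ?b i))"
      using p prod_prob_nonneg[OF \<alpha>(1)] prod_prob_nonneg[OF \<beta>] by (intro min_le_sqrt_mult) auto
    then show "min (p * ?a i) ((1 - p) * ?b i) \<le> sqrt (p * (1 - p)) * sqrt (?a i * ?b i)"
      by (simp add: real_sqrt_mult mult_ac)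
  qed
  also have "\<dots> = sqrt (p * (1 - p)) * (\<Sum>m<d. sqrt (\<alpha> m * \<beta> m)) ^ N"
    by (simp add: sum_prod_prob flip: prod_prob_sqrt sum_distrib_left)
  finally show ?thesis .
qed

section \<open>Binary hypothesis testing\<close>

lemma bhattacharyya_binary_le:
  assumes q: "0 \<le> q1" "q1 \<le> 1" "0 \<le> q2" "q2 \<le> 1"
  shows "sqrt (q1 * q2) + sqrt ((1 - q1) * (1 - q2)) \<le> exp (- ((q1 - q2)\<^sup>2 / 2))"
proof -
  let ?B = "sqrt (q1 * q2) + sqrt ((1 - q1) * (1 - q2))"
  define u where "u = q1 * (1 - q1)"
  define v where "v = q2 * (1 - q2)"
  have uv: "0 \<le> u" "0 \<le> v" using q unfolding u_def v_def by auto
  have "sqrt (q1 * q2) * sqrt ((1 - q1) * (1 - q2)) = sqrt (u * v)"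
    unfolding u_def v_def by (simp add: real_sqrt_mult[symmetric] mult_ac)
  then have "?B\<^sup>2 = q1 * q2 + (1 - q1) * (1 - q2) + 2 * sqrt (u * v)"
    using q by (simp add: power2_sum)
  also have "\<dots> \<le> q1 * q2 + (1 - q1) * (1 - q2) + (u + v)"
    using arith_geo_mean_sqrt[OF uv] by simp
  also have "\<dots> = 1 - (q1 - q2)\<^sup>2"
    unfolding u_def v_def by (simp add: algebra_simps power2_eq_square)
  also have "\<dots> \<le> exp (- (q1 - q2)\<^sup>2)"
    using exp_ge_add_one_self[of "- (q1 - q2)\<^sup>2"] by simp
  also have "\<dots> = (exp (- ((q1 - q2)\<^sup>2 / 2)))\<^sup>2"
    by (simp add: exp_double[symmetric])
  finally show ?thesis by (rule power2_le_imp_le) simp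
qed

lemma decay_at_sample_size_le:
  assumes t: "0 < t" "t \<le> 1" and \<delta>: "0 < \<delta>" "\<delta> < 1" and p: "0 < p" "p < 1"
    and F: "0 \<le> F" "F \<le> exp (- t / 2)"
  shows "sqrt (p * (1 - p)) * F ^ nat \<lfloor>2 * ln (1 / \<delta>) / t\<rfloor> \<le> \<delta>"
proof -
  define L where "L = ln (1 / \<delta>)"
  define N where "N = nat \<lfloor>2 * L / t\<rfloor>"
  have "0 < L" unfolding L_def using \<delta> by simp
  then have N: "2 * L / t - 1 < real N" unfolding N_def using t by linarith
  have sp: "sqrt (p * (1 - p)) \<le> 1 / 2"
  proof (rule real_le_lsqrt)
    show "p * (1 - p) \<le> (1 / 2)\<^sup>2"
      using zero_le_power2[of "p - 1 / 2"] by (simp add: power2_eq_square algebra_simps)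
  qed (use p in auto)
  have "F ^ N \<le> exp (- t / 2) ^ N" by (rule power_mono[OF F(2) F(1)])
  also have "\<dots> = exp (real N * (- t / 2))" by (rule exp_of_nat_mult[symmetric])
  also have "\<dots> \<le> exp (1 / 2 - L)"
    using N t by (simp add: field_simps)
  also have "\<dots> = exp (1 / 2) * \<delta>" unfolding L_def using \<delta> by (simp add: exp_diff)
  finally have FN: "F ^ N \<le> exp (1 / 2) * \<delta>" .
  have "exp (1 / 2 :: real) \<le> 2"
  proof (rule power2_le_imp_le)
    have "(exp (1 / 2 :: real))\<^sup>2 = exp 1" by (simp add: exp_double[symmetric])
    then show "(exp (1 / 2 :: real))\<^sup>2 \<le> 2\<^sup>2" using exp_le by simp
  qed simp
  then have "sqrt (p * (1 - p)) * F ^ N \<le> 1 / 2 * (exp (1 / 2) * \<delta>)"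
    using sp FN F(1) by (intro mult_mono) auto
  also have "\<dots> \<le> \<delta>" using \<open>exp (1 / 2) \<le> 2\<close> \<delta> by simp
  finally show ?thesis unfolding N_def L_def .
qed

lemma nB_binary_le:
  assumes p: "0 < p" "p < 1" and \<delta>: "0 < \<delta>" "\<delta> < 1"
    and \<alpha>: "\<And>m. 0 \<le> \<alpha> m" "\<alpha> 0 + \<alpha> 1 = 1" and \<beta>: "\<And>m. 0 \<le> \<beta> m" "\<beta> 0 + \<beta> 1 = 1"
    and ne: "\<alpha> 0 \<noteq> \<beta> 0"
  shows "nB (diag_real 2 \<alpha>) (diag_real 2 \<beta>) p \<delta> \<le> enat (nat \<lfloor>2 * ln (1 / \<delta>) / (\<alpha> 0 - \<beta> 0)\<^sup>2\<rfloor>)"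
proof -
  define t where "t = (\<alpha> 0 - \<beta> 0)\<^sup>2"
  define N where "N = nat \<lfloor>2 * ln (1 / \<delta>) / t\<rfloor>"
  have q: "0 \<le> \<alpha> 0" "\<alpha> 0 \<le> 1" "0 \<le> \<beta> 0" "\<beta> 0 \<le> 1" "\<alpha> 1 = 1 - \<alpha> 0" "\<beta> 1 = 1 - \<beta> 0"
    using \<alpha>(1)[of 0] \<alpha>(1)[of 1] \<alpha>(2) \<beta>(1)[of 0] \<beta>(1)[of 1] \<beta>(2) by linarith+
  have t: "0 < t" "t \<le> 1"
    unfolding t_def using ne q by (auto simp: abs_square_le_1)
  have sum2: "(\<Sum>m<2. f m) = f 0 + f 1" for f :: "nat \<Rightarrow> real" by (simp add: numeral_2_eq_2)
  have "p_err (tpow (diag_real 2 \<alpha>) N) (tpow (diag_real 2 \<beta>) N) p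
      \<le> sqrt (p * (1 - p)) * (sqrt (\<alpha> 0 * \<beta> 0) + sqrt (\<alpha> 1 * \<beta> 1)) ^ N"
    using p_err_tpow_le[OF p \<alpha>(1) _ \<beta>(1), where d = 2 and N = N] \<alpha>(2) by (simp add: sum2)
  also have "\<dots> \<le> \<delta>"
    unfolding N_def using bhattacharyya_binary_le[of "\<alpha> 0" "\<beta> 0"] q
    by (intro decay_at_sample_size_le[OF t \<delta> p]) (simp_all add: t_def)
  finally show ?thesis unfolding nB_def N_def t_def by (auto intro: INF_lower)
qed

section \<open>A private binary channel\<close>

definition rand_response :: "real \<Rightarrow> nat set \<Rightarrow> nat \<Rightarrow> nat \<Rightarrow> real" where
  "rand_response \<epsilon> S m r = (if (m = 0) = (r \<in> S) then exp \<epsilon> / (exp \<epsilon> + 1) else 1 / (exp \<epsilon> + 1))"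

lemma rand_response_nonneg: "0 \<le> rand_response \<epsilon> S m r"
  by (simp add: rand_response_def add_pos_pos)

lemma sum_rand_response: "(\<Sum>m<2. rand_response \<epsilon> S m r) = 1"
proof -
  have "0 < exp \<epsilon> + 1" by (simp add: add_pos_pos)
  then show ?thesis by (auto simp: rand_response_def numeral_2_eq_2 field_simps)
qed

lemma rand_response_le:
  assumes "0 \<le> \<epsilon>"
  shows "rand_response \<epsilon> S m r \<le> exp \<epsilon> * rand_response \<epsilon> S m r'"
proof -
  have pos: "0 < exp \<epsilon> + 1" by (simp add: add_pos_pos)
  have "1 / (exp \<epsilon> + 1) \<le> exp \<epsilon> / (exp \<epsilon> + 1)"
    using assms pos by (intro divide_right_mono) auto
  then have "rand_response \<epsilon> S m r \<le> exp \<epsilon> * (1 / (exp \<epsilon> + 1))"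
    and "1 / (exp \<epsilon> + 1) \<le> rand_response \<epsilon> S m r'"
    by (auto simp: rand_response_def)
  then show ?thesis by (meson exp_ge_zero mult_left_mono order_trans)
qed

lemma density_diff_eigenbasis:
  assumes dr: "density n \<rho>" and ds: "density n \<sigma>"
  obtains U ev where "unitary_mat n U"
    and "\<And>r. r < n \<Longrightarrow> Re (col_form U n r \<rho>) - Re (col_form U n r \<sigma>) = ev r"
    and "hockey 1 \<rho> \<sigma> = (\<Sum>r<n. max 0 (ev r))"
proof -
  have rho: "\<rho> \<in> carrier_mat n n" and hr: "mat_adjoint \<rho> = \<rho>"
    and sig: "\<sigma> \<in> carrier_mat n n" and hs: "mat_adjoint \<sigma> = \<sigma>"
    using dr ds unfolding density_def psd_def hermitian_def by auto
  define X where "X = \<rho> - complex_of_real 1 \<cdot>\<^sub>m \<sigma>"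
  have XD: "X = \<rho> - \<sigma>" unfolding X_def by (rule eq_matI) (use rho sig in auto)
  have Xc: "X \<in> carrier_mat n n" unfolding XD using rho sig by auto
  have "mat_adjoint X = X"
  proof (rule eq_matI)
    fix i j assume "i < dim_row X" "j < dim_col X"
    then have ij: "i < n" "j < n" using Xc by auto
    have "cnj (\<rho> $$ (j, i)) = \<rho> $$ (i, j)" "cnj (\<sigma> $$ (j, i)) = \<sigma> $$ (i, j)"
      using arg_cong[OF hr, of "\<lambda>M. M $$ (i, j)"] arg_cong[OF hs, of "\<lambda>M. M $$ (i, j)"] rho sig ij
      by auto
    then show "mat_adjoint X $$ (i, j) = X $$ (i, j)" unfolding XD using rho sig ij by auto
  qed (use Xc in auto)
  then obtain U D where sd: "spectral_decomp X U D"
    and "Re (mtrace (pos_part X)) = (\<Sum>r<dim_row X. max 0 (Re (D $$ (r, r))))"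
    using trace_pos_part hermitian_spectral[OF Xc] by blast
  then have E: "hockey 1 \<rho> \<sigma> = (\<Sum>r<n. max 0 (Re (D $$ (r, r))))"
    unfolding hockey_def X_def[symmetric] using Xc by simp
  have U: "unitary_mat n U" and D: "D \<in> carrier_mat n n" and XU: "X = U * D * mat_adjoint U"
    using sd Xc unfolding spectral_decomp_def by auto
  have Uc: "U \<in> carrier_mat n n" using U unfolding unitary_mat_def by simp
  have ev: "Re (col_form U n r \<rho>) - Re (col_form U n r \<sigma>) = Re (D $$ (r, r))" if "r < n" for r
  proof -
    have "col_form U n r \<rho> - col_form U n r \<sigma> = col_form U n r X"
      unfolding XD by (rule col_form_diff[OF rho sig, symmetric])
    also have "\<dots> = D $$ (r, r)"
      using col_form_eq_conjugate[OF Xc Uc that] unitary_conjugate_cancel[OF U D] XU by simp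
    finally show ?thesis by (metis minus_complex.sel(1))
  qed
  show ?thesis by (rule that[OF U ev E])
qed

lemma meas_prob_rand_response_diff:
  fixes \<epsilon> :: real
  assumes dr: "density n \<rho>" and ds: "density n \<sigma>" and U: "unitary_mat n U"
    and ev: "\<And>r. r < n \<Longrightarrow> Re (col_form U n r \<rho>) - Re (col_form U n r \<sigma>) = ev r"
  defines "c \<equiv> rand_response \<epsilon> {r. 0 < ev r}"
  shows "meas_prob n U c \<rho> 0 - meas_prob n U c \<sigma> 0 = (exp \<epsilon> - 1) / (exp \<epsilon> + 1) * (\<Sum>r<n. max 0 (ev r))"
proof -
  define e where "e = exp \<epsilon>"
  have "(\<Sum>r<n. ev r) = (\<Sum>r<n. Re (col_form U n r \<rho>) - Re (col_form U n r \<sigma>))"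
    by (intro sum.cong refl) (simp add: ev)
  also have "\<dots> = 0"
    using sum_col_form_density[OF dr U] sum_col_form_density[OF ds U] by (simp add: sum_subtractf)
  finally have ev0: "(\<Sum>r<n. ev r) = 0" .
  \<comment> \<open>Outcome 0 carries the extra weight (e-1)/(e+1) exactly on the positive eigenvalues,
    and the eigenvalues of rho - sigma sum to zero.\<close>
  have c0: "c 0 r * x = x / (e + 1) + (e - 1) / (e + 1) * max 0 x" if "r \<in> {r. 0 < ev r} \<longleftrightarrow> 0 < x" for r x
  proof (cases "0 < x")
    case True
    have "x / (e + 1) + (e - 1) / (e + 1) * x = (x + (e - 1) * x) / (e + 1)"
      by (simp add: add_divide_distrib)
    also have "\<dots> = e / (e + 1) * x" by (simp add: algebra_simps)
    finally show ?thesis using True that by (simp add: c_def rand_response_def e_def)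
  next
    case False
    then show ?thesis using that by (simp add: c_def rand_response_def e_def)
  qed
  have "meas_prob n U c \<rho> 0 - meas_prob n U c \<sigma> 0
      = (\<Sum>r<n. c 0 r * (Re (col_form U n r \<rho>) - Re (col_form U n r \<sigma>)))"
    unfolding meas_prob_def by (simp add: right_diff_distrib sum_subtractf)
  also have "\<dots> = (\<Sum>r<n. ev r / (e + 1) + (e - 1) / (e + 1) * max 0 (ev r))"
    by (intro sum.cong refl) (simp add: ev c0)
  also have "\<dots> = (e - 1) / (e + 1) * (\<Sum>r<n. max 0 (ev r))"
    using ev0 by (simp add: sum.distrib sum_distrib_left flip: sum_divide_distrib)
  finally show ?thesis unfolding e_def .
qed

lemma exists_binary_LDP_channel:
  assumes \<epsilon>: "0 \<le> \<epsilon>" and dr: "density n \<rho>" and ds: "density n \<sigma>"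
  obtains \<Phi> \<alpha> \<beta> where "LDP n \<epsilon> 2 \<Phi>" "\<Phi> \<rho> = diag_real 2 \<alpha>" "\<Phi> \<sigma> = diag_real 2 \<beta>"
    "\<And>m. 0 \<le> \<alpha> m" "\<alpha> 0 + \<alpha> 1 = 1" "\<And>m. 0 \<le> \<beta> m" "\<beta> 0 + \<beta> 1 = 1"
    "\<alpha> 0 - \<beta> 0 = (exp \<epsilon> - 1) / (exp \<epsilon> + 1) * hockey 1 \<rho> \<sigma>"
proof -
  obtain U ev where U: "unitary_mat n U"
    and ev: "\<And>r. r < n \<Longrightarrow> Re (col_form U n r \<rho>) - Re (col_form U n r \<sigma>) = ev r"
    and E: "hockey 1 \<rho> \<sigma> = (\<Sum>r<n. max 0 (ev r))"
    using density_diff_eigenbasis[OF dr ds] by blast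
  have Uc: "U \<in> carrier_mat n n" using U unfolding unitary_mat_def by simp
  define c where "c = rand_response \<epsilon> {r. 0 < ev r}"
  define \<alpha> where "\<alpha> = meas_prob n U c \<rho>"
  define \<beta> where "\<beta> = meas_prob n U c \<sigma>"
  show ?thesis
  proof (rule that)
    show "LDP n \<epsilon> 2 (meas_channel n U 2 c)"
      unfolding c_def
      using LDP_meas_channel[OF U] rand_response_nonneg sum_rand_response rand_response_le[OF \<epsilon>]
      by blast
    show "meas_channel n U 2 c \<rho> = diag_real 2 \<alpha>" "meas_channel n U 2 c \<sigma> = diag_real 2 \<beta>"
      unfolding \<alpha>_def \<beta>_def using meas_channel_density Uc dr ds by blast+
    show "0 \<le> \<alpha> m" "0 \<le> \<beta> m" for m
      unfolding \<alpha>_def \<beta>_def c_def using meas_prob_nonneg Uc dr ds rand_response_nonneg by blast+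
    have "(\<Sum>m<2. \<alpha> m) = 1" "(\<Sum>m<2. \<beta> m) = 1"
      unfolding \<alpha>_def \<beta>_def
      by (rule sum_meas_prob[OF dr U] sum_meas_prob[OF ds U], simp add: c_def sum_rand_response)+
    then show "\<alpha> 0 + \<alpha> 1 = 1" "\<beta> 0 + \<beta> 1 = 1" by (simp_all add: numeral_2_eq_2)
    show "\<alpha> 0 - \<beta> 0 = (exp \<epsilon> - 1) / (exp \<epsilon> + 1) * hockey 1 \<rho> \<sigma>"
      unfolding \<alpha>_def \<beta>_def c_def E by (rule meas_prob_rand_response_diff[OF dr ds U ev])
  qed
qed

lemma nB_LDP_le:
  assumes \<epsilon>: "0 < \<epsilon>" and p: "0 < p" "p < 1" and \<delta>: "0 < \<delta>" "\<delta> < 1"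
    and dr: "density n \<rho>" and ds: "density n \<sigma>" and E: "hockey 1 \<rho> \<sigma> \<noteq> 0"
  shows "ereal_of_enat (nB_LDP n \<epsilon> \<rho> \<sigma> p \<delta>)
    \<le> ereal (((exp \<epsilon> + 1) / (exp \<epsilon> - 1))\<^sup>2 * (2 * ln (1 / \<delta>) / (hockey 1 \<rho> \<sigma>)\<^sup>2))"
proof -
  obtain \<Phi> \<alpha> \<beta> where LDP: "LDP n \<epsilon> 2 \<Phi>" and \<Phi>: "\<Phi> \<rho> = diag_real 2 \<alpha>" "\<Phi> \<sigma> = diag_real 2 \<beta>"
    and \<alpha>: "\<And>m. 0 \<le> \<alpha> m" "\<alpha> 0 + \<alpha> 1 = 1" and \<beta>: "\<And>m. 0 \<le> \<beta> m" "\<beta> 0 + \<beta> 1 = 1"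
    and diff: "\<alpha> 0 - \<beta> 0 = (exp \<epsilon> - 1) / (exp \<epsilon> + 1) * hockey 1 \<rho> \<sigma>"
    using exists_binary_LDP_channel[OF less_imp_le[OF \<epsilon>] dr ds] by blast
  have e: "1 < exp \<epsilon>" using \<epsilon> by simp
  have "0 < (exp \<epsilon> - 1) / (exp \<epsilon> + 1)"
    using e exp_gt_zero[of \<epsilon>] by (intro divide_pos_pos) linarith+
  then have "(exp \<epsilon> - 1) / (exp \<epsilon> + 1) * hockey 1 \<rho> \<sigma> \<noteq> 0"
    using E by (metis mult_eq_0_iff order_less_irrefl)
  then have "\<alpha> 0 \<noteq> \<beta> 0" using diff by auto
  have "nB_LDP n \<epsilon> \<rho> \<sigma> p \<delta> \<le> nB (\<Phi> \<rho>) (\<Phi> \<sigma>) p \<delta>"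
    unfolding nB_LDP_def using LDP by (auto intro!: INF_lower2[of "(2, \<Phi>)"])
  also have "\<dots> \<le> enat (nat \<lfloor>2 * ln (1 / \<delta>) / (\<alpha> 0 - \<beta> 0)\<^sup>2\<rfloor>)"
    unfolding \<Phi> by (rule nB_binary_le[OF p \<delta> \<alpha> \<beta> \<open>\<alpha> 0 \<noteq> \<beta> 0\<close>])
  finally have "ereal_of_enat (nB_LDP n \<epsilon> \<rho> \<sigma> p \<delta>) \<le> ereal (nat \<lfloor>2 * ln (1 / \<delta>) / (\<alpha> 0 - \<beta> 0)\<^sup>2\<rfloor>)"
    by (metis ereal_of_enat_le_iff ereal_of_enat_simps(1))
  also have "real (nat \<lfloor>2 * ln (1 / \<delta>) / (\<alpha> 0 - \<beta> 0)\<^sup>2\<rfloor>) \<le> 2 * ln (1 / \<delta>) / (\<alpha> 0 - \<beta> 0)\<^sup>2"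
    using \<delta> by simp
  also have "\<dots> = ((exp \<epsilon> + 1) / (exp \<epsilon> - 1))\<^sup>2 * (2 * ln (1 / \<delta>) / (hockey 1 \<rho> \<sigma>)\<^sup>2)"
    unfolding diff using e E by (simp add: field_simps power2_eq_square)
  finally show ?thesis by simp
qed

theorem mainTheorem6:
  fixes dA :: nat and \<epsilon> p \<delta> :: real and \<rho> \<sigma> :: "complex mat"
  assumes "\<epsilon> > 0" and "0 < p" and "p < 1" and "0 < \<delta>" and "\<delta> < 1"
    and "density dA \<rho>" and "density dA \<sigma>"
  shows "ereal_of_enat (nB_LDP dA \<epsilon> \<rho> \<sigma> p \<delta>)
           \<le> ereal (((exp \<epsilon> + 1) / (exp \<epsilon> - 1))\<^sup>2)
              * ediv (2 * ln (1 / \<delta>)) ((hockey 1 \<rho> \<sigma>)\<^sup>2)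
       \<and> ereal_of_enat (nB_LDP dA \<epsilon> \<rho> \<sigma> p (p / 4))
           \<le> ereal (((exp \<epsilon> + 1) / (exp \<epsilon> - 1))\<^sup>2)
              * ediv (2 * ln (1 / p) + 2 * ln 4) ((hockey 1 \<rho> \<sigma>)\<^sup>2)"
proof (cases "hockey 1 \<rho> \<sigma> = 0")
  case True
  have "1 < exp \<epsilon>" using assms(1) by simp
  then have "0 < exp \<epsilon> + 1" "0 < exp \<epsilon> - 1" by linarith+
  then have "0 < ((exp \<epsilon> + 1) / (exp \<epsilon> - 1))\<^sup>2" by (metis divide_pos_pos zero_less_power)
  then show ?thesis by (simp add: True ediv_def)
next
  case False
  have p4: "0 < p / 4" "p / 4 < 1" using assms(2,3) by auto
  have "2 * ln (1 / (p / 4)) = 2 * ln (1 / p) + 2 * ln 4"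
    using assms(2) by (simp add: ln_div)
  then show ?thesis
    using nB_LDP_le[OF assms(1-5) assms(6,7) False] nB_LDP_le[OF assms(1-3) p4 assms(6,7) False]
    by (simp add: ediv_def False)
qed

end
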